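(* Let $\alpha\in(0,1)$, $R>0$, $m=\sqrt{1-\alpha^2}/\alpha$, and consider the initial state $(x_O,y_O,y_T)$ at time $0$. Let $D=\{(x,y):(x-x_O)^2+(y-y_O)^2\le R^2\}$ be the observation disk and $\mathrm{DL}=\{(\pm s\alpha,\,y_T+s\sqrt{1-\alpha^2}):s\ge0\}$ the Decision Line. If $D$ lies beneath the Decision Line, i.e. $D\subseteq\{(x,y):y-y_T\le m|x|\}$, and $D\cap\mathrm{DL}$ contains at most one point, then the optimal observation time is $0$ (the state belongs to $\mathscr B_1$).
   Context: Target: position $(0,y_T(t))$, $\dot y_T=1$, $y_T(0)=y_T$. Observer: position $(x_O(t),y_O(t))$ starting at $(x_O,y_O)$, $\dot x_O=\alpha\cos\psi(t)$, $\dot y_O=\alpha\sin\psi(t)$, heading $\psi:[0,\infty)\to\mathbb R$ a measurable control. For a control, $t_2=\inf\{t\ge0:x_O(t)^2+(y_O(t)-y_T(t))^2\le R^2\}$, $t_f=\inf\{t\ge t_2:x_O(t)^2+(y_O(t)-y_T(t))^2>R^2\}$, and $t_{\text{obs}}=t_f-t_2$ (taken to be $0$ if no contact occurs). The optimal observation time is the supremum of $t_{\text{obs}}$ over all controls. The Decision Line is the set of points $Z$ whose Apollonius circle $\{P:|PZ|=\alpha|PT|\}$ with the initial target position $T=(0,y_T)$ is tangent to the target's path $\{(0,y):y\ge y_T\}$, which is the union of the two rays given. $\mathscr B_1$ denotes the set of states with optimal observation time $0$. *)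

theory Defs
  imports "HOL-Analysis.Analysis"
begin

definition obs_x :: "real \<Rightarrow> real \<Rightarrow> (real \<Rightarrow> real) \<Rightarrow> real \<Rightarrow> real" where
  "obs_x alpha xO psi t = xO + integral {0..t} (\<lambda>s. alpha * cos (psi s))"

definition obs_y :: "real \<Rightarrow> real \<Rightarrow> (real \<Rightarrow> real) \<Rightarrow> real \<Rightarrow> real" where
  "obs_y alpha yO psi t = yO + integral {0..t} (\<lambda>s. alpha * sin (psi s))"

definition dist2 :: "real \<Rightarrow> real \<Rightarrow> real \<Rightarrow> real \<Rightarrow> (real \<Rightarrow> real) \<Rightarrow> real \<Rightarrow> real" where
  "dist2 alpha xO yO yT psi t =
     (obs_x alpha xO psi t)\<^sup>2 + (obs_y alpha yO psi t - (yT + t))\<^sup>2"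

definition contact_times :: "real \<Rightarrow> real \<Rightarrow> real \<Rightarrow> real \<Rightarrow> real \<Rightarrow> (real \<Rightarrow> real) \<Rightarrow> real set" where
  "contact_times alpha R xO yO yT psi = {t. t \<ge> 0 \<and> dist2 alpha xO yO yT psi t \<le> R\<^sup>2}"

definition t2 :: "real \<Rightarrow> real \<Rightarrow> real \<Rightarrow> real \<Rightarrow> real \<Rightarrow> (real \<Rightarrow> real) \<Rightarrow> real" where
  "t2 alpha R xO yO yT psi = Inf (contact_times alpha R xO yO yT psi)"

text \<open>Exit time t_f, as an extended real (infinite if the observer never leaves).\<close>
definition tf :: "real \<Rightarrow> real \<Rightarrow> real \<Rightarrow> real \<Rightarrow> real \<Rightarrow> (real \<Rightarrow> real) \<Rightarrow> ereal" where
  "tf alpha R xO yO yT psi =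
     Inf (ereal ` {t. t \<ge> t2 alpha R xO yO yT psi \<and> dist2 alpha xO yO yT psi t > R\<^sup>2})"

definition t_obs :: "real \<Rightarrow> real \<Rightarrow> real \<Rightarrow> real \<Rightarrow> real \<Rightarrow> (real \<Rightarrow> real) \<Rightarrow> ereal" where
  "t_obs alpha R xO yO yT psi =
     (if contact_times alpha R xO yO yT psi = {} then 0
      else tf alpha R xO yO yT psi - ereal (t2 alpha R xO yO yT psi))"

definition opt_obs_time :: "real \<Rightarrow> real \<Rightarrow> real \<Rightarrow> real \<Rightarrow> real \<Rightarrow> ereal" where
  "opt_obs_time alpha R xO yO yT =
     (SUP psi \<in> borel_measurable lebesgue. t_obs alpha R xO yO yT psi)"

definition obs_disk :: "real \<Rightarrow> real \<Rightarrow> real \<Rightarrow> (real \<times> real) set" where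
  "obs_disk R xO yO = {(x, y). (x - xO)\<^sup>2 + (y - yO)\<^sup>2 \<le> R\<^sup>2}"

definition decision_line :: "real \<Rightarrow> real \<Rightarrow> (real \<times> real) set" where
  "decision_line alpha yT =
     {(s * alpha, yT + s * sqrt (1 - alpha\<^sup>2)) | s. s \<ge> 0} \<union>
     {(- s * alpha, yT + s * sqrt (1 - alpha\<^sup>2)) | s. s \<ge> 0}"

end

theory Submission
  imports Defs
begin

text \<open>
  Let the observer be in contact at time \<open>t\<close>, and shift the centre of the disk \<open>D\<close> by the
  vector from the observer to the target.  The resulting point \<open>P\<close> lies in \<open>D\<close>, and its
  distance to the target position \<open>(0, yT + t)\<close> is the length of the observer's displacement,
  at most \<open>\<alpha> t\<close>.  The disks of radius \<open>\<alpha> t\<close> about \<open>(0, yT + t)\<close> fill the cone above the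
  Decision Line, each touching the line at the single height \<open>yT + (1 - \<alpha>\<^sup>2) t\<close>.  As \<open>D\<close> lies
  beneath the line, \<open>P\<close> must be such a touching point, so every contact time is read off
  from a point of \<open>D \<inter> DL\<close>.  There is at most one such point, hence at most one contact
  time, and the observation time is \<open>0\<close> for every control.
\<close>

lemma bounded_measurable_integrable_on_interval:
  fixes f :: "real \<Rightarrow> real"
  assumes "f \<in> borel_measurable lebesgue" and "\<And>x. \<bar>f x\<bar> \<le> C"
  shows "f integrable_on {a..b}"
proof (rule measurable_bounded_by_integrable_imp_integrable_real[where g = "\<lambda>_. C"])
  show "f \<in> borel_measurable (lebesgue_on {a..b})"
    using assms(1) by (simp add: measurable_restrict_space1)
qed (use assms(2) in auto)

lemma integral_cos_sin_bound:
  fixes psi :: "real \<Rightarrow> real"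
  assumes psi: "psi \<in> borel_measurable lebesgue" and "0 \<le> t"
  shows "(integral {0..t} (\<lambda>s. cos (psi s)))\<^sup>2 + (integral {0..t} (\<lambda>s. sin (psi s)))\<^sup>2 \<le> t\<^sup>2"
proof -
  define A where "A = integral {0..t} (\<lambda>s. cos (psi s))"
  define B where "B = integral {0..t} (\<lambda>s. sin (psi s))"
  have "(\<lambda>s. cos (psi s)) integrable_on {0..t}" "(\<lambda>s. sin (psi s)) integrable_on {0..t}"
    by (auto intro!: bounded_measurable_integrable_on_interval[where C = 1]
        measurable_compose[OF psi borel_measurable_cos] measurable_compose[OF psi borel_measurable_sin])
  then have "((\<lambda>s. of_real (cos (psi s)) + \<i> * of_real (sin (psi s)))
      has_integral of_real A + \<i> * of_real B) {0..t}"
    unfolding A_def B_def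
    by (intro has_integral_add has_integral_mult_right has_integral_of_real integrable_integral)
  then have cis_integral: "((\<lambda>s. Complex (cos (psi s)) (sin (psi s))) has_integral Complex A B) {0..t}"
    by (simp add: Complex_eq)
  have norm_le: "cmod (Complex A B) \<le> t"
    using has_integral_bound_real[OF _ _ cis_integral, of 1 "{}"] \<open>0 \<le> t\<close> by simp
  show ?thesis
    using power_mono[OF norm_le norm_ge_zero, of 2] by (simp add: cmod_power2 A_def B_def)
qed

lemma observer_displacement_bound:
  assumes "psi \<in> borel_measurable lebesgue" and "0 \<le> t"
  shows "(obs_x alpha xO psi t - xO)\<^sup>2 + (obs_y alpha yO psi t - yO)\<^sup>2 \<le> (alpha * t)\<^sup>2"
proof -
  have "(obs_x alpha xO psi t - xO)\<^sup>2 + (obs_y alpha yO psi t - yO)\<^sup>2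
      = alpha\<^sup>2 * ((integral {0..t} (\<lambda>s. cos (psi s)))\<^sup>2 + (integral {0..t} (\<lambda>s. sin (psi s)))\<^sup>2)"
    by (simp add: obs_x_def obs_y_def power_mult_distrib distrib_left)
  also have "\<dots> \<le> alpha\<^sup>2 * t\<^sup>2"
    using integral_cos_sin_bound[OF assms] by (simp add: mult_left_mono)
  finally show ?thesis
    by (simp add: power_mult_distrib)
qed

lemma near_target_below_decision_line:
  fixes a X v t :: real
  assumes "0 < a" "a < 1" and below: "v \<le> (sqrt (1 - a\<^sup>2) / a) * \<bar>X\<bar>"
    and "0 \<le> t" and near: "X\<^sup>2 + (t - v)\<^sup>2 \<le> (a * t)\<^sup>2"
  shows "v = (1 - a\<^sup>2) * t" and "a * v = sqrt (1 - a\<^sup>2) * \<bar>X\<bar>"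
proof -
  define b where "b = sqrt (1 - a\<^sup>2)"
  have "a\<^sup>2 < 1"
    using assms(1,2) by (simp add: power_less_one_iff)
  then have b2: "b\<^sup>2 = 1 - a\<^sup>2" and "0 \<le> b"
    by (simp_all add: b_def)
  have av: "a * v \<le> b * \<bar>X\<bar>"
    using below \<open>0 < a\<close> by (simp add: b_def field_simps)
  have "(b\<^sup>2 * t - v)\<^sup>2 + (b * X)\<^sup>2 - (a * v)\<^sup>2 = b\<^sup>2 * (X\<^sup>2 + (t - v)\<^sup>2 - (a * t)\<^sup>2)"
    using b2 by algebra
  also have "\<dots> \<le> 0"
    using near by (simp add: mult_nonneg_nonpos)
  finally have key: "(b\<^sup>2 * t - v)\<^sup>2 + (b * \<bar>X\<bar>)\<^sup>2 \<le> (a * v)\<^sup>2"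
    by (simp add: power_mult_distrib)
  have "0 \<le> v"
  proof (rule ccontr)
    assume "\<not> 0 \<le> v"
    then have "(a * v)\<^sup>2 < v\<^sup>2"
      using \<open>a\<^sup>2 < 1\<close> by (simp add: power_mult_distrib)
    moreover have "v\<^sup>2 \<le> (b\<^sup>2 * t - v)\<^sup>2"
      using power_mono[of "- v" "b\<^sup>2 * t - v" 2] \<open>\<not> 0 \<le> v\<close> \<open>0 \<le> t\<close> by simp
    ultimately show False
      using key zero_le_power2[of "b * \<bar>X\<bar>"] by linarith
  qed
  then have "(a * v)\<^sup>2 \<le> (b * \<bar>X\<bar>)\<^sup>2"
    using av \<open>0 < a\<close> by (intro power_mono) auto
  with key have "(b\<^sup>2 * t - v)\<^sup>2 = 0" "(a * v)\<^sup>2 = (b * \<bar>X\<bar>)\<^sup>2"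
    using zero_le_power2[of "b\<^sup>2 * t - v"] by linarith+
  then show "v = (1 - a\<^sup>2) * t" and "a * v = sqrt (1 - a\<^sup>2) * \<bar>X\<bar>"
    using \<open>0 \<le> v\<close> \<open>0 < a\<close> \<open>0 \<le> b\<close> by (auto simp: b2 b_def[symmetric] power2_eq_iff_nonneg)
qed

lemma decision_lineI:
  assumes "0 < alpha" and "alpha * v = sqrt (1 - alpha\<^sup>2) * \<bar>x\<bar>"
  shows "(x, yT + v) \<in> decision_line alpha yT"
proof -
  define s where "s = \<bar>x\<bar> / alpha"
  have "0 \<le> s" and "\<bar>x\<bar> = s * alpha" and "v = s * sqrt (1 - alpha\<^sup>2)"
    using assms by (auto simp: s_def field_simps)
  then have "(x, yT + v) = (s * alpha, yT + s * sqrt (1 - alpha\<^sup>2)) \<or>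
      (x, yT + v) = (- s * alpha, yT + s * sqrt (1 - alpha\<^sup>2))"
    by (cases "0 \<le> x") auto
  then show ?thesis
    unfolding decision_line_def using \<open>0 \<le> s\<close> by blast
qed

lemma contact_point_on_decision_line:
  fixes alpha R xO yO yT :: real
  assumes "0 < alpha" and "alpha < 1"
    and below: "obs_disk R xO yO \<subseteq> {(x, y). y - yT \<le> (sqrt (1 - alpha\<^sup>2) / alpha) * \<bar>x\<bar>}"
    and psi: "psi \<in> borel_measurable lebesgue"
    and contact: "t \<in> contact_times alpha R xO yO yT psi"
  obtains p where "p \<in> obs_disk R xO yO \<inter> decision_line alpha yT"
    and "snd p = yT + (1 - alpha\<^sup>2) * t"
proof -
  define X where "X = obs_x alpha xO psi t - xO"
  define Y where "Y = obs_y alpha yO psi t - yO"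
  have "0 \<le> t" and "dist2 alpha xO yO yT psi t \<le> R\<^sup>2"
    using contact by (auto simp: contact_times_def)
  moreover have "(- X - xO)\<^sup>2 + (yT + (t - Y) - yO)\<^sup>2 = dist2 alpha xO yO yT psi t"
    by (simp add: dist2_def X_def Y_def power2_eq_square algebra_simps)
  ultimately have in_disk: "(- X, yT + (t - Y)) \<in> obs_disk R xO yO"
    by (simp add: obs_disk_def)
  then have below_line: "t - Y \<le> (sqrt (1 - alpha\<^sup>2) / alpha) * \<bar>- X\<bar>"
    using below by auto
  have "X\<^sup>2 + Y\<^sup>2 \<le> (alpha * t)\<^sup>2"
    unfolding X_def Y_def by (rule observer_displacement_bound[OF psi \<open>0 \<le> t\<close>])
  then have near: "(- X)\<^sup>2 + (t - (t - Y))\<^sup>2 \<le> (alpha * t)\<^sup>2"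
    by simp
  note on_line = near_target_below_decision_line[OF assms(1,2) below_line \<open>0 \<le> t\<close> near]
  from in_disk on_line decision_lineI[OF assms(1) on_line(2)] show thesis
    by (intro that[of "(- X, yT + (t - Y))"]) auto
qed

lemma t_obs_eq_0_if_contact_time_unique:
  assumes "\<And>t t'. t \<in> contact_times alpha R xO yO yT psi \<Longrightarrow>
      t' \<in> contact_times alpha R xO yO yT psi \<Longrightarrow> t = t'"
  shows "t_obs alpha R xO yO yT psi = 0"
proof (cases "contact_times alpha R xO yO yT psi = {}")
  case True
  then show ?thesis
    by (simp add: t_obs_def)
next
  case False
  then obtain t0 where C: "contact_times alpha R xO yO yT psi = {t0}"
    using assms by blast
  then have t2: "t2 alpha R xO yO yT psi = t0"
    by (simp add: t2_def)
  from C have t0: "0 \<le> t0" "dist2 alpha xO yO yT psi t0 \<le> R\<^sup>2"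
    by (auto simp: contact_times_def set_eq_iff)
  have exit: "R\<^sup>2 < dist2 alpha xO yO yT psi t" if "t0 < t" for t
  proof -
    have "t \<notin> contact_times alpha R xO yO yT psi"
      using C that by simp
    then show ?thesis
      using t0(1) that by (simp add: contact_times_def)
  qed
  have "{t. t0 \<le> t \<and> R\<^sup>2 < dist2 alpha xO yO yT psi t} = {t0<..}"
    using t0(2) exit by (fastforce simp: less_le)
  then have "tf alpha R xO yO yT psi = ereal t0"
    using ereal_Inf'[of "{t0<..}"] by (simp add: tf_def t2)
  then show ?thesis
    using False by (simp add: t_obs_def t2 zero_ereal_def)
qed

lemma contact_time_unique:
  fixes alpha R xO yO yT :: real
  assumes "0 < alpha" and "alpha < 1"
    and below: "obs_disk R xO yO \<subseteq> {(x, y). y - yT \<le> (sqrt (1 - alpha\<^sup>2) / alpha) * \<bar>x\<bar>}"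
    and touch: "\<forall>p \<in> obs_disk R xO yO \<inter> decision_line alpha yT.
      \<forall>q \<in> obs_disk R xO yO \<inter> decision_line alpha yT. p = q"
    and psi: "psi \<in> borel_measurable lebesgue"
    and "t \<in> contact_times alpha R xO yO yT psi" and "t' \<in> contact_times alpha R xO yO yT psi"
  shows "t = t'"
proof -
  obtain p q
    where p: "p \<in> obs_disk R xO yO \<inter> decision_line alpha yT" "snd p = yT + (1 - alpha\<^sup>2) * t"
      and q: "q \<in> obs_disk R xO yO \<inter> decision_line alpha yT" "snd q = yT + (1 - alpha\<^sup>2) * t'"
    using contact_point_on_decision_line[OF assms(1,2) below psi] assms(6,7) by metis
  have "p = q"
    using touch p(1) q(1) by blast
  then have "(1 - alpha\<^sup>2) * t = (1 - alpha\<^sup>2) * t'"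
    using p(2) q(2) by auto
  moreover have "alpha\<^sup>2 < 1"
    using assms(1,2) by (simp add: power_less_one_iff)
  ultimately show "t = t'"
    by simp
qed

theorem lemma8:
  fixes alpha R xO yO yT :: real
  assumes "0 < alpha" and "alpha < 1" and "R > 0"
    and "obs_disk R xO yO \<subseteq>
           {(x, y). y - yT \<le> (sqrt (1 - alpha\<^sup>2) / alpha) * \<bar>x\<bar>}"
    and "\<forall>p \<in> obs_disk R xO yO \<inter> decision_line alpha yT.
           \<forall>q \<in> obs_disk R xO yO \<inter> decision_line alpha yT. p = q"
  shows "opt_obs_time alpha R xO yO yT = 0"
proof -
  have "t_obs alpha R xO yO yT psi = 0" if "psi \<in> borel_measurable lebesgue" for psi
    using t_obs_eq_0_if_contact_time_unique contact_time_unique[OF assms(1,2,4,5) that] by blast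
  then have "opt_obs_time alpha R xO yO yT =
      (SUP psi \<in> (borel_measurable lebesgue :: (real \<Rightarrow> real) set). 0)"
    unfolding opt_obs_time_def by (intro SUP_cong) auto
  also have "\<dots> = 0"
    by (rule SUP_const) auto
  finally show ?thesis .
qed

end
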